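(* Let $G$ be a connected graph on $n$ vertices that is not a tree. Let $Z_{\mathrm{sink},0}$ be the number of sink-free orientations of $G$ and $Z_{\mathrm{sink},1}$ the number of orientations of $G$ with exactly one sink. Then $\frac{Z_{\mathrm{sink},1}}{Z_{\mathrm{sink},0}}\le n(n-1)$.
   Context: An orientation assigns each edge $\{u,v\}$ a direction $(u,v)$ or $(v,u)$; a sink is a vertex all of whose incident edges are directed towards it; a sink-free orientation has no sink. *)

theory Defs
  imports Complex_Main "HOL-Library.FuncSet"
begin

definition simple_graph :: "'a set \<Rightarrow> 'a set set \<Rightarrow> bool" where
  "simple_graph V E \<longleftrightarrow> finite V \<and> (\<forall>e\<in>E. e \<subseteq> V \<and> card e = 2)"

definition adj :: "'a set set \<Rightarrow> 'a \<Rightarrow> 'a \<Rightarrow> bool" where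
  "adj E u v \<longleftrightarrow> {u, v} \<in> E"

definition connected_graph :: "'a set \<Rightarrow> 'a set set \<Rightarrow> bool" where
  "connected_graph V E \<longleftrightarrow> V \<noteq> {} \<and> (\<forall>u\<in>V. \<forall>v\<in>V. (adj E)\<^sup>*\<^sup>* u v)"

definition is_cycle :: "'a set set \<Rightarrow> 'a list \<Rightarrow> bool" where
  "is_cycle E cs \<longleftrightarrow> length cs \<ge> 3 \<and> distinct cs
     \<and> (\<forall>i. Suc i < length cs \<longrightarrow> adj E (cs ! i) (cs ! Suc i))
     \<and> adj E (last cs) (hd cs)"

definition acyclic_graph :: "'a set set \<Rightarrow> bool" where
  "acyclic_graph E \<longleftrightarrow> \<not> (\<exists>cs. is_cycle E cs)"

definition is_tree :: "'a set \<Rightarrow> 'a set set \<Rightarrow> bool" where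
  "is_tree V E \<longleftrightarrow> connected_graph V E \<and> acyclic_graph E"

text \<open>An orientation assigns to each edge its head (the endpoint it is directed towards).\<close>
definition orientations :: "'a set set \<Rightarrow> ('a set \<Rightarrow> 'a) set" where
  "orientations E = (\<Pi>\<^sub>E e\<in>E. e)"

definition is_sink :: "'a set set \<Rightarrow> ('a set \<Rightarrow> 'a) \<Rightarrow> 'a \<Rightarrow> bool" where
  "is_sink E h v \<longleftrightarrow> (\<forall>e\<in>E. v \<in> e \<longrightarrow> h e = v)"

definition sinks :: "'a set \<Rightarrow> 'a set set \<Rightarrow> ('a set \<Rightarrow> 'a) \<Rightarrow> 'a set" where
  "sinks V E h = {v\<in>V. is_sink E h v}"

definition Z_sink0 :: "'a set \<Rightarrow> 'a set set \<Rightarrow> nat" where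
  "Z_sink0 V E = card {h\<in>orientations E. sinks V E h = {}}"

definition Z_sink1 :: "'a set \<Rightarrow> 'a set set \<Rightarrow> nat" where
  "Z_sink1 V E = card {h\<in>orientations E. card (sinks V E h) = 1}"

end

theory Submission
  imports Defs
begin

text \<open>
  Send a sink-free orientation \<open>\<tau>\<close> and an ordered pair \<open>(a, b)\<close> of distinct vertices to the
  orientation obtained by following out-edges of \<open>\<tau>\<close> from \<open>a\<close> until \<open>b\<close> is first reached and
  reversing the edges of this walk. Every orientation \<open>\<sigma>\<close> with a single sink \<open>v\<close> is in the
  image: starting at \<open>v\<close>, walk backwards against the orientation as long as the current vertex
  has exactly one out-edge, until reaching a vertex \<open>w\<close> with a second out-edge. Reversing this
  path makes every vertex a non-sink, and in the new orientation the out-walk from \<open>v\<close> retraces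
  the path to \<open>w\<close>; so \<open>\<sigma>\<close> is the image of \<open>(\<tau>, v, w)\<close>, and \<open>Z\<^sub>1 \<le> n (n - 1) Z\<^sub>0\<close>.

  The vertex \<open>w\<close> exists because \<open>G\<close> has a cycle. Otherwise the vertices reached by such backward
  paths would be closed under adjacency, hence all of \<open>V\<close>; each of them except \<open>v\<close> would have a
  unique out-edge, leading strictly closer to \<open>v\<close>, and the vertex of a cycle farthest from \<open>v\<close>
  would have both of its cycle edges as out-edges.
\<close>

definition other_end :: "'a set \<Rightarrow> 'a \<Rightarrow> 'a" where
  "other_end e x = the_elem (e - {x})"

lemma other_end_doubleton [simp]:
  "x \<noteq> y \<Longrightarrow> other_end {x, y} x = y" "x \<noteq> y \<Longrightarrow> other_end {x, y} y = x"
  unfolding other_end_def by (auto simp: insert_Diff_if)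

lemma card_2_doubletonE:
  assumes "card e = 2" "x \<in> e"
  obtains y where "y \<noteq> x" "e = {x, y}"
  using assms by (metis card_2_iff doubleton_eq_iff insertE singletonD)

lemma other_end_mem: "card e = 2 \<Longrightarrow> x \<in> e \<Longrightarrow> other_end e x \<in> e"
  by (elim card_2_doubletonE) auto

lemma other_end_other_end:
  assumes "card e = 2" "x \<in> e"
  shows "other_end e (other_end e x) = x"
  using assms by (elim card_2_doubletonE) auto

lemma orientations_iff:
  "h \<in> orientations E \<longleftrightarrow> (\<forall>e\<in>E. h e \<in> e) \<and> (\<forall>e. e \<notin> E \<longrightarrow> h e = undefined)"
  unfolding orientations_def PiE_iff extensional_def by auto

text \<open>An orientation \<open>\<sigma>\<close> picks the head \<open>\<sigma> e\<close> of each edge, so \<open>e\<close> is an out-edge of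
  \<open>x \<in> e\<close> iff \<open>\<sigma> e \<noteq> x\<close>.\<close>

lemma sinks_singleton_out_edge:
  assumes "sinks V E \<sigma> = {v}" "x \<in> V" "x \<noteq> v"
  obtains e where "e \<in> E" "x \<in> e" "\<sigma> e \<noteq> x"
proof -
  have "x \<notin> sinks V E \<sigma>" using assms by simp
  then show ?thesis using assms(2) that unfolding sinks_def is_sink_def by blast
qed

definition reverse_edges :: "'a set set \<Rightarrow> ('a set \<Rightarrow> 'a) \<Rightarrow> 'a set \<Rightarrow> 'a" where
  "reverse_edges P h = (\<lambda>e. if e \<in> P then other_end e (h e) else h e)"

definition out_nbr :: "'a set set \<Rightarrow> ('a set \<Rightarrow> 'a) \<Rightarrow> 'a \<Rightarrow> 'a" where
  "out_nbr E h x = (SOME y. {x, y} \<in> E \<and> h {x, y} = y)"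

definition out_walk :: "'a set set \<Rightarrow> ('a set \<Rightarrow> 'a) \<Rightarrow> 'a \<Rightarrow> nat \<Rightarrow> 'a" where
  "out_walk E h a i = (out_nbr E h ^^ i) a"

definition path_edges :: "(nat \<Rightarrow> 'a) \<Rightarrow> nat \<Rightarrow> 'a set set" where
  "path_edges p k = {{p i, p (Suc i)} | i. i < k}"

text \<open>
  If \<open>x\<close> has several out-edges, \<open>out_nbr\<close> picks one arbitrarily; this is harmless, since the
  counting argument only needs every one-sink orientation to be hit by some \<open>reverse_walk\<close>.
\<close>
definition reverse_walk :: "'a set set \<Rightarrow> ('a set \<Rightarrow> 'a) \<Rightarrow> 'a \<Rightarrow> 'a \<Rightarrow> 'a set \<Rightarrow> 'a" where
  "reverse_walk E h a b =
     reverse_edges (path_edges (out_walk E h a) (LEAST i. 0 < i \<and> out_walk E h a i = b)) h"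

lemma out_walk_eq_path:
  assumes "\<And>i. i < k \<Longrightarrow> out_nbr E h (p i) = p (Suc i)" "i \<le> k"
  shows "out_walk E h (p 0) i = p i"
  using assms(2) by (induction i) (auto simp: out_walk_def assms(1))

lemma reverse_walk_eq_reverse_path:
  assumes walk: "\<And>i. i \<le> k \<Longrightarrow> out_walk E h a i = p i"
    and inj: "inj_on p {0..k}" and "0 < k"
  shows "reverse_walk E h a (p k) = reverse_edges (path_edges p k) h"
proof -
  have "(LEAST i. 0 < i \<and> out_walk E h a i = p k) = k"
  proof (rule Least_equality)
    show "0 < k \<and> out_walk E h a k = p k" using \<open>0 < k\<close> walk by simp
  next
    fix j assume j: "0 < j \<and> out_walk E h a j = p k"
    show "k \<le> j"
    proof (rule ccontr)
      assume "\<not> k \<le> j"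
      then have "p j = p k" using walk[of j] j by simp
      with \<open>\<not> k \<le> j\<close> show False using inj_onD[OF inj, of j k] by auto
    qed
  qed
  moreover have "\<And>i. i < k \<Longrightarrow> {out_walk E h a i, out_walk E h a (Suc i)} = {p i, p (Suc i)}"
    using walk by simp
  then have "path_edges (out_walk E h a) k = path_edges p k"
    unfolding path_edges_def by blast
  ultimately show ?thesis unfolding reverse_walk_def by simp
qed

lemma path_edges_vertex: "e \<in> path_edges p k \<Longrightarrow> x \<in> e \<Longrightarrow> \<exists>j\<le>k. x = p j"
  unfolding path_edges_def by (auto intro: less_imp_le_nat Suc_leI)

lemma path_edges_incident:
  assumes "inj_on p {0..k}" "e \<in> path_edges p k" "p j \<in> e" "j \<le> k"
  shows "(j < k \<and> e = {p j, p (Suc j)}) \<or> (0 < j \<and> e = {p (j - 1), p j})"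
proof -
  obtain i where i: "i < k" "e = {p i, p (Suc i)}" using assms(2) unfolding path_edges_def by auto
  then have "p j = p i \<or> p j = p (Suc i)" using assms(3) by auto
  then have "j = i \<or> j = Suc i"
    using inj_onD[OF assms(1), of j i] inj_onD[OF assms(1), of j "Suc i"] i(1) assms(4) by auto
  then show ?thesis using i by (elim disjE) simp_all
qed

text \<open>
  A forced path is a directed path \<open>p m \<rightarrow> \<dots> \<rightarrow> p 0 = v\<close> in which the path edge is the only
  out-edge of every \<open>p i\<close> with \<open>i > 0\<close>; a branching path extends it by one edge to a new vertex
  that has a second out-edge.
\<close>
definition forced_path :: "'a set set \<Rightarrow> ('a set \<Rightarrow> 'a) \<Rightarrow> 'a \<Rightarrow> (nat \<Rightarrow> 'a) \<Rightarrow> nat \<Rightarrow> bool" where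
  "forced_path E \<sigma> v p m \<longleftrightarrow> p 0 = v \<and> inj_on p {0..m}
     \<and> (\<forall>i<m. {p i, p (Suc i)} \<in> E \<and> \<sigma> {p i, p (Suc i)} = p i)
     \<and> (\<forall>i e. 0 < i \<longrightarrow> i \<le> m \<longrightarrow> e \<in> E \<longrightarrow> p i \<in> e \<longrightarrow> \<sigma> e \<noteq> p i \<longrightarrow> e = {p (i - 1), p i})"

definition forced_ends :: "'a set set \<Rightarrow> ('a set \<Rightarrow> 'a) \<Rightarrow> 'a \<Rightarrow> 'a set" where
  "forced_ends E \<sigma> v = {p m | p m. forced_path E \<sigma> v p m}"

definition forced_depth :: "'a set set \<Rightarrow> ('a set \<Rightarrow> 'a) \<Rightarrow> 'a \<Rightarrow> 'a \<Rightarrow> nat" where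
  "forced_depth E \<sigma> v x = (LEAST m. \<exists>p. forced_path E \<sigma> v p m \<and> p m = x)"

definition branching_path :: "'a set set \<Rightarrow> ('a set \<Rightarrow> 'a) \<Rightarrow> 'a \<Rightarrow> (nat \<Rightarrow> 'a) \<Rightarrow> nat \<Rightarrow> bool" where
  "branching_path E \<sigma> v p m \<longleftrightarrow> forced_path E \<sigma> v p m
     \<and> {p m, p (Suc m)} \<in> E \<and> \<sigma> {p m, p (Suc m)} = p m \<and> p (Suc m) \<notin> p ` {0..m}
     \<and> (\<exists>e\<in>E. p (Suc m) \<in> e \<and> \<sigma> e \<noteq> p (Suc m) \<and> e \<noteq> {p m, p (Suc m)})"

lemma forced_path_prefix: "forced_path E \<sigma> v p m \<Longrightarrow> j \<le> m \<Longrightarrow> forced_path E \<sigma> v p j"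
  unfolding forced_path_def by (auto intro: inj_on_subset)

lemma forced_ends_prefix: "forced_path E \<sigma> v p m \<Longrightarrow> j \<le> m \<Longrightarrow> p j \<in> forced_ends E \<sigma> v"
  unfolding forced_ends_def by (blast dest: forced_path_prefix)

lemma forced_path_cong:
  assumes "forced_path E \<sigma> v p m" "\<And>i. i \<le> m \<Longrightarrow> q i = p i"
  shows "forced_path E \<sigma> v q m"
proof -
  have "inj_on q {0..m}" using assms by (simp add: forced_path_def inj_on_def)
  then show ?thesis using assms unfolding forced_path_def by simp
qed

lemma forced_path_snoc:
  assumes path: "forced_path E \<sigma> v p m"
    and edge: "{p m, y} \<in> E" "\<sigma> {p m, y} = p m" and new: "y \<notin> p ` {0..m}"
    and forced: "\<And>e. e \<in> E \<Longrightarrow> y \<in> e \<Longrightarrow> \<sigma> e \<noteq> y \<Longrightarrow> e = {p m, y}"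
  shows "forced_path E \<sigma> v (p(Suc m := y)) (Suc m)"
proof -
  let ?q = "p(Suc m := y)"
  have "inj_on ?q {0..Suc m}"
    using path new by (simp add: forced_path_def atLeast0_atMost_Suc inj_on_fun_updI)
  moreover have "\<forall>i<Suc m. {?q i, ?q (Suc i)} \<in> E \<and> \<sigma> {?q i, ?q (Suc i)} = ?q i"
    using path edge by (auto simp: forced_path_def less_Suc_eq)
  moreover have "e = {?q (i - 1), ?q i}"
    if "0 < i" "i \<le> Suc m" "e \<in> E" "?q i \<in> e" "\<sigma> e \<noteq> ?q i" for i e
    using that path forced by (cases "i = Suc m") (auto simp: forced_path_def)
  ultimately show ?thesis using path unfolding forced_path_def by simp
qed

lemma forced_depth_path:
  assumes "x \<in> forced_ends E \<sigma> v"
  obtains p where "forced_path E \<sigma> v p (forced_depth E \<sigma> v x)" "p (forced_depth E \<sigma> v x) = x"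
proof -
  have "\<exists>m p. forced_path E \<sigma> v p m \<and> p m = x" using assms unfolding forced_ends_def by blast
  from LeastI_ex[OF this] show ?thesis using that unfolding forced_depth_def by blast
qed

lemma forced_depth_le: "forced_path E \<sigma> v p m \<Longrightarrow> forced_depth E \<sigma> v (p m) \<le> m"
  unfolding forced_depth_def by (rule Least_le) blast

lemma forced_path_out_edge:
  assumes "forced_path E \<sigma> v p m" "is_sink E \<sigma> v" "\<sigma> e \<in> e"
    and "e \<in> E" "p m \<in> e" "\<sigma> e \<noteq> p m"
  shows "0 < m" "e = {p (m - 1), p m}" "\<sigma> e = p (m - 1)"
proof -
  show "0 < m"
    using assms unfolding forced_path_def is_sink_def by (metis gr0I)
  then show "e = {p (m - 1), p m}" using assms unfolding forced_path_def by blast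
  then show "\<sigma> e = p (m - 1)" using assms(3,6) by auto
qed

lemma forced_ends_out_edge:
  assumes "t \<in> forced_ends E \<sigma> v" "is_sink E \<sigma> v" "\<sigma> e \<in> e" "e \<in> E" "t \<in> e" "\<sigma> e \<noteq> t"
  shows "\<sigma> e \<in> forced_ends E \<sigma> v" "forced_depth E \<sigma> v (\<sigma> e) < forced_depth E \<sigma> v t"
proof -
  define n where "n = forced_depth E \<sigma> v t"
  obtain p where p: "forced_path E \<sigma> v p n" "p n = t"
    using assms(1) unfolding n_def by (rule forced_depth_path)
  have "p n \<in> e" "\<sigma> e \<noteq> p n" using p(2) assms(5,6) by simp_all
  note out = forced_path_out_edge[OF p(1) assms(2,3,4) this]
  show "\<sigma> e \<in> forced_ends E \<sigma> v" using out(3) forced_ends_prefix[OF p(1)] by simp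
  have "forced_depth E \<sigma> v (\<sigma> e) \<le> n - 1"
    using out(3) forced_depth_le[OF forced_path_prefix[OF p(1)]] by simp
  then show "forced_depth E \<sigma> v (\<sigma> e) < forced_depth E \<sigma> v t"
    using out(1) unfolding n_def by linarith
qed

lemma forced_ends_unique_out_edge:
  assumes "t \<in> forced_ends E \<sigma> v" "is_sink E \<sigma> v"
    and "\<sigma> e1 \<in> e1" "e1 \<in> E" "t \<in> e1" "\<sigma> e1 \<noteq> t"
    and "\<sigma> e2 \<in> e2" "e2 \<in> E" "t \<in> e2" "\<sigma> e2 \<noteq> t"
  shows "e1 = e2"
proof -
  obtain p m where "forced_path E \<sigma> v p m" "p m = t" using assms(1) unfolding forced_ends_def by blast
  then show ?thesis using forced_path_out_edge(2) assms by metis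
qed

lemma cycle_adj_mod:
  assumes "is_cycle E cs" "i < length cs"
  shows "adj E (cs ! i) (cs ! (Suc i mod length cs))"
proof (cases "Suc i < length cs")
  case True
  then show ?thesis using assms unfolding is_cycle_def by auto
next
  case False
  then have "i = length cs - 1" "cs \<noteq> []" using assms(2) by auto
  then have "cs ! i = last cs" "cs ! (Suc i mod length cs) = hd cs"
    by (simp_all add: last_conv_nth hd_conv_nth)
  then show ?thesis using assms unfolding is_cycle_def by auto
qed

lemma cycle_vertex_two_neighbours:
  assumes "is_cycle E cs" "z \<in> set cs"
  obtains a b where "a \<noteq> b" "a \<in> set cs" "b \<in> set cs" "{z, a} \<in> E" "{b, z} \<in> E"
proof -
  define L where "L = length cs"
  have L: "3 \<le> L" and dist: "distinct cs" using assms(1) unfolding is_cycle_def L_def by auto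
  obtain j where j: "j < L" "cs ! j = z" using assms(2) unfolding L_def by (auto simp: in_set_conv_nth)
  define i where "i = (j + L - 1) mod L"
  have "Suc i mod L = Suc (j + L - 1) mod L" unfolding i_def by (simp add: mod_Suc_eq)
  also have "Suc (j + L - 1) = j + L" using L by simp
  finally have i_succ: "Suc i mod L = j" using j by simp
  have "Suc j mod L \<noteq> i"
  proof
    assume "Suc j mod L = i"
    then have "Suc (Suc j mod L) mod L = j" using i_succ by simp
    then have "Suc (Suc j) mod L = j" by (simp add: mod_Suc_eq)
    then show False using j L by (auto simp: mod_if split: if_splits)
  qed
  moreover have "Suc j mod L < L" "i < L" using L unfolding i_def by simp_all
  ultimately have "cs ! (Suc j mod L) \<noteq> cs ! i"
    using nth_eq_iff_index_eq[OF dist] unfolding L_def by simp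
  moreover have "{z, cs ! (Suc j mod L)} \<in> E"
    using cycle_adj_mod[OF assms(1), of j] j unfolding L_def adj_def by simp
  moreover have "{cs ! i, z} \<in> E"
    using cycle_adj_mod[OF assms(1), of i] \<open>i < L\<close> j i_succ unfolding L_def adj_def by simp
  moreover have "cs ! (Suc j mod L) \<in> set cs" "cs ! i \<in> set cs"
    using \<open>Suc j mod L < L\<close> \<open>i < L\<close> unfolding L_def by simp_all
  ultimately show ?thesis using that by blast
qed

context
  fixes V :: "'a set" and E :: "'a set set"
  assumes graph: "simple_graph V E"
begin

lemma card_edge: "e \<in> E \<Longrightarrow> card e = 2"
  using graph unfolding simple_graph_def by auto

lemma edge_subset: "e \<in> E \<Longrightarrow> e \<subseteq> V"
  using graph unfolding simple_graph_def by auto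

lemma edge_distinct: "{x, y} \<in> E \<Longrightarrow> x \<noteq> y"
  using card_edge by fastforce

lemma reverse_edges_orientation:
  assumes "h \<in> orientations E" "P \<subseteq> E"
  shows "reverse_edges P h \<in> orientations E"
  using assms other_end_mem[OF card_edge]
  unfolding orientations_iff reverse_edges_def by auto

lemma reverse_edges_reverse_edges:
  assumes "h \<in> orientations E" "P \<subseteq> E"
  shows "reverse_edges P (reverse_edges P h) = h"
  using assms other_end_other_end[OF card_edge]
  unfolding orientations_iff reverse_edges_def by fastforce

lemma out_nbr_eqI:
  assumes "{x, y} \<in> E" "h {x, y} = y"
    and unique: "\<And>e. e \<in> E \<Longrightarrow> x \<in> e \<Longrightarrow> h e \<noteq> x \<Longrightarrow> e = {x, y}"
  shows "out_nbr E h x = y"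
  unfolding out_nbr_def
proof (rule some_equality)
  fix z assume z: "{x, z} \<in> E \<and> h {x, z} = z"
  moreover have "z \<noteq> x" using z edge_distinct by blast
  ultimately have "{x, z} = {x, y}" using unique[of "{x, z}"] by simp
  then show "z = y" using \<open>z \<noteq> x\<close> by (simp add: doubleton_eq_iff)
qed (use assms(1,2) in simp)

lemma acyclic_if_forced_ends_cover:
  assumes \<sigma>: "\<sigma> \<in> orientations E" and sink: "is_sink E \<sigma> v"
    and cover: "V \<subseteq> forced_ends E \<sigma> v"
  shows "acyclic_graph E"
  unfolding acyclic_graph_def
proof
  assume "\<exists>cs. is_cycle E cs"
  then obtain cs where cs: "is_cycle E cs" by blast
  let ?d = "forced_depth E \<sigma> v"
  have "?d ` set cs \<noteq> {}" using cs unfolding is_cycle_def by auto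
  then obtain z where z: "z \<in> set cs" "?d z = Max (?d ` set cs)"
    using Max_in[of "?d ` set cs"] by (metis List.finite_set finite_imageI imageE)
  then have z_max: "?d u \<le> ?d z" if "u \<in> set cs" for u using that by simp
  obtain a b where ab: "a \<noteq> b" "a \<in> set cs" "b \<in> set cs" "{z, a} \<in> E" "{b, z} \<in> E"
    using cycle_vertex_two_neighbours[OF cs z(1)] by blast
  have heads: "\<sigma> e \<in> e" if "e \<in> E" for e using \<sigma> that unfolding orientations_iff by blast
  have zV: "z \<in> forced_ends E \<sigma> v" using ab(4) edge_subset cover by blast
  \<comment> \<open>\<open>z\<close> is deepest on the cycle and depth decreases along out-edges\<close>
  have out: "\<sigma> e \<noteq> z" if "e \<in> E" "e = {z, u}" "u \<in> set cs" for e u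
  proof
    assume "\<sigma> e = z"
    moreover have "u \<noteq> z" using that edge_distinct by blast
    moreover have "u \<in> forced_ends E \<sigma> v" using that edge_subset cover by blast
    ultimately have "?d z < ?d u"
      using forced_ends_out_edge(2)[OF _ sink heads[OF that(1)] that(1)] that(2) by fastforce
    then show False using z_max[OF that(3)] by simp
  qed
  have "\<sigma> {z, a} \<noteq> z" using out ab by blast
  moreover have "\<sigma> {b, z} \<noteq> z" by (rule out[of _ b]) (use ab in auto)
  ultimately have "{z, a} = {b, z}"
    using forced_ends_unique_out_edge[OF zV sink heads ab(4) _ _ heads ab(5)] ab(4,5) by simp
  then show False using ab(1) edge_distinct[OF ab(4)] by (simp add: doubleton_eq_iff)
qed

lemma forced_ends_cover:
  assumes conn: "connected_graph V E" and \<sigma>: "\<sigma> \<in> orientations E"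
    and sink: "is_sink E \<sigma> v" and "v \<in> V"
    and closed: "\<And>e. e \<in> E \<Longrightarrow> \<sigma> e \<in> forced_ends E \<sigma> v \<Longrightarrow> e \<subseteq> forced_ends E \<sigma> v"
  shows "V \<subseteq> forced_ends E \<sigma> v"
proof
  fix u assume "u \<in> V"
  then have "(adj E)\<^sup>*\<^sup>* v u" using conn \<open>v \<in> V\<close> unfolding connected_graph_def by blast
  then show "u \<in> forced_ends E \<sigma> v"
  proof (induction rule: rtranclp_induct)
    case base
    have "forced_path E \<sigma> v (\<lambda>_. v) 0" by (simp add: forced_path_def)
    then show ?case using forced_ends_prefix[of E \<sigma> v "\<lambda>_. v" 0 0] by simp
  next
    case (step x y)
    then have e: "{x, y} \<in> E" unfolding adj_def by simp
    have "\<sigma> {x, y} \<in> {x, y}" using \<sigma> e unfolding orientations_iff by blast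
    then have "\<sigma> {x, y} \<in> forced_ends E \<sigma> v"
      using forced_ends_out_edge(1)[OF step.IH sink _ e] step.IH by (cases "\<sigma> {x, y} = x") auto
    then show ?case using closed[OF e] by simp
  qed
qed

lemma edge_closed_if_no_branching_path:
  assumes \<sigma>: "\<sigma> \<in> orientations E" and no_branch: "\<nexists>p m. branching_path E \<sigma> v p m"
    and e: "e \<in> E" "\<sigma> e \<in> forced_ends E \<sigma> v"
  shows "e \<subseteq> forced_ends E \<sigma> v"
proof -
  obtain p m where p: "forced_path E \<sigma> v p m" "p m = \<sigma> e"
    using e(2) unfolding forced_ends_def by auto
  obtain y where y: "y \<noteq> \<sigma> e" "e = {\<sigma> e, y}"
    using card_edge[OF e(1)] \<sigma> e(1) unfolding orientations_iff by (meson card_2_doubletonE)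
  have "y \<in> forced_ends E \<sigma> v"
  proof (cases "y \<in> p ` {0..m}")
    case True
    then show ?thesis using forced_ends_prefix[OF p(1)] by auto
  next
    case False
    let ?q = "p(Suc m := y)"
    have "forced_path E \<sigma> v ?q m" by (rule forced_path_cong[OF p(1)]) simp
    moreover have "?q ` {0..m} = p ` {0..m}" by auto
    ultimately have "\<not> (\<exists>e'\<in>E. y \<in> e' \<and> \<sigma> e' \<noteq> y \<and> e' \<noteq> {p m, y})"
      using no_branch False e(1) y p(2) unfolding branching_path_def
      by (metis fun_upd_same fun_upd_apply n_not_Suc_n)
    then have "forced_path E \<sigma> v ?q (Suc m)"
      using forced_path_snoc[OF p(1), of y] e(1) y p(2) False by auto
    then show ?thesis using forced_ends_prefix[of E \<sigma> v ?q "Suc m" "Suc m"] by simp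
  qed
  then have "{\<sigma> e, y} \<subseteq> forced_ends E \<sigma> v" using e(2) by simp
  then show ?thesis by (metis y(2))
qed

lemma branching_path_exists:
  assumes conn: "connected_graph V E" and not_tree: "\<not> is_tree V E"
    and \<sigma>: "\<sigma> \<in> orientations E" and sinks: "sinks V E \<sigma> = {v}"
  shows "\<exists>p m. branching_path E \<sigma> v p m"
proof (rule ccontr)
  assume no_branch: "\<nexists>p m. branching_path E \<sigma> v p m"
  have sink: "is_sink E \<sigma> v" and "v \<in> V" using sinks unfolding sinks_def by auto
  have "V \<subseteq> forced_ends E \<sigma> v"
    using forced_ends_cover[OF conn \<sigma> sink \<open>v \<in> V\<close>] edge_closed_if_no_branching_path[OF \<sigma> no_branch]
    by blast
  then have "acyclic_graph E" by (rule acyclic_if_forced_ends_cover[OF \<sigma> sink])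
  then show False using conn not_tree unfolding is_tree_def by simp
qed

context
  fixes \<sigma> :: "'a set \<Rightarrow> 'a" and v :: 'a and p :: "nat \<Rightarrow> 'a" and m :: nat
  assumes \<sigma>: "\<sigma> \<in> orientations E" and sinks: "sinks V E \<sigma> = {v}"
    and branching: "branching_path E \<sigma> v p m"
begin

abbreviation reversed :: "'a set \<Rightarrow> 'a" where
  "reversed \<equiv> reverse_edges (path_edges p (Suc m)) \<sigma>"

lemma branching_path_inj: "inj_on p {0..Suc m}"
  using branching unfolding branching_path_def forced_path_def
  by (simp add: atLeast0_atMost_Suc inj_on_insert)

lemma branching_path_edge: "i \<le> m \<Longrightarrow> {p i, p (Suc i)} \<in> E \<and> \<sigma> {p i, p (Suc i)} = p i"
  using branching unfolding branching_path_def forced_path_def by (auto simp: le_less)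

lemma branching_path_start: "p 0 = v"
  using branching unfolding branching_path_def forced_path_def by blast

lemma branching_path_branch: "\<exists>e\<in>E. p (Suc m) \<in> e \<and> \<sigma> e \<noteq> p (Suc m) \<and> e \<noteq> {p m, p (Suc m)}"
  using branching unfolding branching_path_def by blast

lemma path_edges_subset: "path_edges p (Suc m) \<subseteq> E"
  using branching_path_edge unfolding path_edges_def by auto

lemma reversed_path_edge:
  assumes "i \<le> m"
  shows "reversed {p i, p (Suc i)} = p (Suc i)"
proof -
  have "{p i, p (Suc i)} \<in> path_edges p (Suc m)" using assms unfolding path_edges_def by auto
  moreover have "p i \<noteq> p (Suc i)" using edge_distinct branching_path_edge[OF assms] by blast
  ultimately show ?thesis using branching_path_edge[OF assms] by (simp add: reverse_edges_def)
qed

lemma reversed_out_edge: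
  assumes "i \<le> m" "e \<in> E" "p i \<in> e" "reversed e \<noteq> p i"
  shows "e = {p i, p (Suc i)}"
proof (cases "e \<in> path_edges p (Suc m)")
  case True
  from path_edges_incident[OF branching_path_inj True assms(3)] assms(1)
  consider "e = {p i, p (Suc i)}" | "0 < i" "e = {p (i - 1), p i}" by auto
  then show ?thesis
  proof cases
    case 2
    then show ?thesis using reversed_path_edge[of "i - 1"] assms by simp
  qed
next
  case False
  then have out: "\<sigma> e \<noteq> p i" using assms(4) by (simp add: reverse_edges_def)
  show ?thesis
  proof (cases "i = 0")
    case True
    then show ?thesis using out assms(2,3) sinks branching_path_start
      unfolding sinks_def is_sink_def by auto
  next
    case False
    then have "e = {p (i - 1), p i}"
      using branching out assms unfolding branching_path_def forced_path_def by simp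
    moreover have "{p (i - 1), p i} \<in> path_edges p (Suc m)"
      using False assms(1) unfolding path_edges_def by (auto intro!: exI[of _ "i - 1"])
    ultimately show ?thesis using \<open>e \<notin> path_edges p (Suc m)\<close> by simp
  qed
qed

lemma reversed_sink_free: "sinks V E reversed = {}"
proof -
  have "\<exists>e\<in>E. x \<in> e \<and> reversed e \<noteq> x" if "x \<in> V" for x
  proof (cases "\<exists>j\<le>Suc m. x = p j")
    case True
    then obtain j where j: "j \<le> Suc m" "x = p j" by blast
    show ?thesis
    proof (cases "j \<le> m")
      case True
      have "{p j, p (Suc j)} \<in> E" "p j \<noteq> p (Suc j)"
        using branching_path_edge[OF True] edge_distinct by blast+
      then show ?thesis using reversed_path_edge[OF True] j(2)
        by (intro bexI[of _ "{p j, p (Suc j)}"]) simp_all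
    next
      case False
      then have "j = Suc m" using j by simp
      obtain e where e: "e \<in> E" "x \<in> e" "\<sigma> e \<noteq> x" "e \<noteq> {p m, p (Suc m)}"
        using branching_path_branch \<open>j = Suc m\<close> j(2) by blast
      have "e \<notin> path_edges p (Suc m)"
        using path_edges_incident[OF branching_path_inj, of e "Suc m"] e(2,4) j(2) \<open>j = Suc m\<close>
        by auto
      then show ?thesis using e by (intro bexI[of _ e]) (simp_all add: reverse_edges_def)
    qed
  next
    case False
    then have "x \<noteq> p 0" using le0 by blast
    then have "x \<noteq> v" using branching_path_start by simp
    then obtain e where e: "e \<in> E" "x \<in> e" "\<sigma> e \<noteq> x"
      using sinks_singleton_out_edge[OF sinks \<open>x \<in> V\<close>] by blast
    have "e \<notin> path_edges p (Suc m)" using path_edges_vertex[of e p "Suc m" x] e(2) False by blast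
    then show ?thesis using e by (intro bexI[of _ e]) (simp_all add: reverse_edges_def)
  qed
  then show ?thesis unfolding sinks_def is_sink_def by blast
qed

lemma reverse_walk_reversed: "reverse_walk E reversed v (p (Suc m)) = \<sigma>"
proof -
  have "out_nbr E reversed (p i) = p (Suc i)" if "i < Suc m" for i
  proof (rule out_nbr_eqI)
    show "{p i, p (Suc i)} \<in> E" using branching_path_edge that by simp
    show "reversed {p i, p (Suc i)} = p (Suc i)" using reversed_path_edge that by simp
  qed (use reversed_out_edge that in simp)
  moreover note branching_path_start
  ultimately have "out_walk E reversed v i = p i" if "i \<le> Suc m" for i
    using out_walk_eq_path[of "Suc m" E reversed p i] that by simp
  then have "reverse_walk E reversed v (p (Suc m)) = reverse_edges (path_edges p (Suc m)) reversed"
    using branching_path_inj by (intro reverse_walk_eq_reverse_path) auto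
  also have "\<dots> = \<sigma>" using \<sigma> path_edges_subset by (rule reverse_edges_reverse_edges)
  finally show ?thesis .
qed

end

lemma one_sink_is_reverse_walk:
  assumes conn: "connected_graph V E" and not_tree: "\<not> is_tree V E"
    and \<sigma>: "\<sigma> \<in> orientations E" and sinks: "sinks V E \<sigma> = {v}"
  shows "\<exists>\<tau> w. \<tau> \<in> orientations E \<and> sinks V E \<tau> = {} \<and> w \<in> V \<and> w \<noteq> v
    \<and> reverse_walk E \<tau> v w = \<sigma>"
proof -
  obtain p m where branching: "branching_path E \<sigma> v p m"
    using branching_path_exists[OF conn not_tree \<sigma> sinks] by blast
  let ?\<tau> = "reverse_edges (path_edges p (Suc m)) \<sigma>"
  have edge: "{p m, p (Suc m)} \<in> E" using branching_path_edge[OF \<sigma> sinks branching, of m] by simp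
  have "p (Suc m) \<notin> p ` {0..m}" using branching unfolding branching_path_def by blast
  moreover have "p 0 \<in> p ` {0..m}" by simp
  ultimately have "p (Suc m) \<noteq> v" using branching_path_start[OF \<sigma> sinks branching] by metis
  moreover have "p (Suc m) \<in> V" using edge edge_subset by blast
  moreover have "?\<tau> \<in> orientations E"
    using reverse_edges_orientation[OF \<sigma> path_edges_subset[OF \<sigma> sinks branching]] .
  ultimately show ?thesis
    using reversed_sink_free[OF \<sigma> sinks branching] reverse_walk_reversed[OF \<sigma> sinks branching]
    by (intro exI[of _ ?\<tau>] exI[of _ "p (Suc m)"]) simp
qed

lemma finite_orientations: "finite (orientations E)"
proof -
  have "finite E" using graph unfolding simple_graph_def by (meson Pow_iff finite_Pow_iff finite_subset subsetI)
  moreover have "finite e" if "e \<in> E" for e using edge_subset[OF that] graph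
    unfolding simple_graph_def by (auto intro: finite_subset)
  ultimately show ?thesis unfolding orientations_def by (rule finite_PiE)
qed

lemma Z_sink1_le_Z_sink0:
  assumes "connected_graph V E" "\<not> is_tree V E"
  shows "Z_sink1 V E \<le> Z_sink0 V E * (card V * (card V - 1))"
proof -
  define S0 where "S0 = {h \<in> orientations E. sinks V E h = {}}"
  define S1 where "S1 = {h \<in> orientations E. card (sinks V E h) = 1}"
  define pairs where "pairs = (SIGMA a:V. V - {a})"
  have "finite V" using graph unfolding simple_graph_def by simp
  then have finite: "finite S0" "finite pairs"
    using finite_orientations unfolding S0_def pairs_def by auto
  have "S1 \<subseteq> (\<lambda>(\<tau>, a, b). reverse_walk E \<tau> a b) ` (S0 \<times> pairs)"
  proof
    fix \<sigma> assume "\<sigma> \<in> S1"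
    then obtain v where \<sigma>: "\<sigma> \<in> orientations E" and sinks: "sinks V E \<sigma> = {v}"
      unfolding S1_def by (auto simp: card_1_singleton_iff)
    have "v \<in> V" using sinks unfolding sinks_def by auto
    obtain \<tau> w where "\<tau> \<in> orientations E" "sinks V E \<tau> = {}" "w \<in> V" "w \<noteq> v"
      and "reverse_walk E \<tau> v w = \<sigma>"
      using one_sink_is_reverse_walk[OF assms \<sigma> sinks] by blast
    moreover have "(\<tau>, v, w) \<in> S0 \<times> pairs"
      using calculation \<open>v \<in> V\<close> unfolding S0_def pairs_def by simp
    ultimately show "\<sigma> \<in> (\<lambda>(\<tau>, a, b). reverse_walk E \<tau> a b) ` (S0 \<times> pairs)"
      by (intro image_eqI[of _ _ "(\<tau>, v, w)"]) simp_all
  qed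
  then have "card S1 \<le> card ((\<lambda>(\<tau>, a, b). reverse_walk E \<tau> a b) ` (S0 \<times> pairs))"
    using finite by (intro card_mono) auto
  also have "\<dots> \<le> card (S0 \<times> pairs)" by (rule card_image_le) (use finite in simp)
  finally have "card S1 \<le> card S0 * card pairs" by (simp add: card_cartesian_product)
  moreover have "card pairs = card V * (card V - 1)"
    using \<open>finite V\<close> unfolding pairs_def by (simp add: card_SigmaI)
  ultimately show ?thesis unfolding Z_sink0_def Z_sink1_def S0_def S1_def by simp
qed

end

theorem theorem17:
  fixes V :: "'a set" and E :: "'a set set"
  assumes "simple_graph V E"
    and "connected_graph V E"
    and "\<not> is_tree V E"
  shows "real (Z_sink1 V E) / real (Z_sink0 V E) \<le> real (card V) * (real (card V) - 1)"
proof -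
  have "V \<noteq> {}" "finite V" using assms(1,2) unfolding connected_graph_def simple_graph_def by auto
  then have n: "1 \<le> card V" by (simp add: Suc_leI card_gt_0_iff)
  have "Z_sink1 V E \<le> Z_sink0 V E * (card V * (card V - 1))"
    using Z_sink1_le_Z_sink0[OF assms] .
  then have "real (Z_sink1 V E) \<le> real (Z_sink0 V E) * (real (card V) * (real (card V) - 1))"
    using n by (metis of_nat_1 of_nat_diff of_nat_le_iff of_nat_mult)
  moreover have "0 \<le> real (card V) * (real (card V) - 1)" using n by simp
  \<comment> \<open>also covers \<open>Z_sink0 V E = 0\<close>, where the quotient is \<open>0\<close> since \<open>x / 0 = 0\<close>\<close>
  ultimately show ?thesis by (simp add: divide_le_eq mult.commute)
qed

end
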